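(* Let $V$ and $Y$ be left and right canonical matrices, respectively, for $T$ at $\lambda_0$. Then $\Delta^{-1}VTY$ and $VTY\Delta^{-1}$ both belong to $\mathcal{H}_0^{r\times r}$ and are unimodular.
   Context: Let $\Omega\subset\mathbb{C}$ be open and $\lambda_0\in\Omega$ fixed. $\mathcal{H}$ denotes the ring of holomorphic functions on $\Omega$, and $\mathcal{H}_0$ the ring of functions holomorphic in some neighborhood of $\lambda_0$. Write $\chi_0(\lambda)=\lambda-\lambda_0$. A matrix $M\in\mathcal{H}_0^{n\times n}$ is unimodular if it has an inverse in $\mathcal{H}_0^{n\times n}$ (equivalently, $M(\lambda_0)$ is nonsingular). Throughout, $T\in\mathcal{H}^{n\times n}$ with $\det T$ not identically zero and $\det T(\lambda_0)=0$, and $r=\dim\ker T(\lambda_0)$. There exist unimodular $U_L,U_R\in\mathcal{H}_0^{n\times n}$ and uniquely determined integers $m_1\ge\cdots\ge m_n\ge 0$ (the partial multiplicities) with $U_LTU_R=\mathrm{diag}(\chi_0^{m_1},\dots,\chi_0^{m_n})$; $m_i>0$ exactly for $i\le r$. Set $\Delta=\mathrm{diag}(\chi_0^{m_1},\dots,\chi_0^{m_r})$. A root function for $T$ at $\lambda_0$ is $y\in\mathcal{H}^n$ with $y(\lambda_0)\neq0$ and $T(\lambda_0)y(\lambda_0)=0$; its multiplicity $\nu(y)$ is the order of the zero of $Ty$ at $\lambda_0$. A right canonical matrix for $T$ at $\lambda_0$ is $Y\in\mathcal{H}^{n\times r}$ whose columns $y_1,\dots,y_r$ are root functions such that (a) $y_1(\lambda_0),\dots,y_r(\lambda_0)$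 are linearly independent, (b) $\sum_{i=1}^r\nu(y_i)=\sum_{i=1}^r m_i$, (c) $\nu(y_1)\ge\cdots\ge\nu(y_r)$. A left root function is a row vector $v\in\mathcal{H}^{1\times n}$ with $v(\lambda_0)\ne0$ and $v(\lambda_0)T(\lambda_0)=0$, with multiplicity the order of the zero of $vT$ at $\lambda_0$; a left canonical matrix $V\in\mathcal{H}^{r\times n}$ is defined analogously. *)

theory Defs
  imports "HOL-Analysis.Analysis" "Jordan_Normal_Form.Matrix_Kernel" "Jordan_Normal_Form.Determinant"
begin

definition mat_holo :: "complex set \<Rightarrow> nat \<Rightarrow> nat \<Rightarrow> (complex \<Rightarrow> complex mat) \<Rightarrow> bool" where
  "mat_holo S nr nc M \<longleftrightarrow> (\<forall>z\<in>S. M z \<in> carrier_mat nr nc) \<and>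
     (\<forall>i<nr. \<forall>j<nc. (\<lambda>z. M z $$ (i,j)) holomorphic_on S)"

definition vec_holo :: "complex set \<Rightarrow> nat \<Rightarrow> (complex \<Rightarrow> complex vec) \<Rightarrow> bool" where
  "vec_holo S n v \<longleftrightarrow> (\<forall>z\<in>S. v z \<in> carrier_vec n) \<and>
     (\<forall>i<n. (\<lambda>z. v z $ i) holomorphic_on S)"

text \<open>M is an n x n matrix in H_0 (holomorphic on some neighbourhood of lam0) having an
  inverse in H_0.\<close>
definition unimodular0 :: "complex \<Rightarrow> nat \<Rightarrow> (complex \<Rightarrow> complex mat) \<Rightarrow> bool" where
  "unimodular0 lam0 n M \<longleftrightarrow> (\<exists>U. open U \<and> lam0 \<in> U \<and> mat_holo U n n M \<and>
     (\<exists>M'. mat_holo U n n M' \<and> (\<forall>z\<in>U. M z * M' z = 1\<^sub>m n \<and> M' z * M z = 1\<^sub>m n)))"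

text \<open>diag(chi_0^{m_1},...,chi_0^{m_k}) at the point z, and its inverse (z ~= lam0).\<close>
definition Delta :: "complex \<Rightarrow> nat list \<Rightarrow> nat \<Rightarrow> complex \<Rightarrow> complex mat" where
  "Delta lam0 ms k z = mat k k (\<lambda>(i,j). if i = j then (z - lam0) ^ (ms ! i) else 0)"

definition Delta_inv :: "complex \<Rightarrow> nat list \<Rightarrow> nat \<Rightarrow> complex \<Rightarrow> complex mat" where
  "Delta_inv lam0 ms k z = mat k k (\<lambda>(i,j). if i = j then 1 / (z - lam0) ^ (ms ! i) else 0)"

text \<open>ms = [m_1,...,m_n] are the partial multiplicities of T at lam0 (0-based list).\<close>
definition partial_mults :: "complex set \<Rightarrow> nat \<Rightarrow> (complex \<Rightarrow> complex mat) \<Rightarrow> complex \<Rightarrow> nat list \<Rightarrow> bool" where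
  "partial_mults \<Omega> n T lam0 ms \<longleftrightarrow> length ms = n \<and> sorted_wrt (\<ge>) ms \<and>
     (\<exists>UL UR. unimodular0 lam0 n UL \<and> unimodular0 lam0 n UR \<and>
       (\<exists>U. open U \<and> lam0 \<in> U \<and> (\<forall>z\<in>U \<inter> \<Omega>. UL z * T z * UR z = Delta lam0 ms n z)))"

definition zero_order :: "complex set \<Rightarrow> nat \<Rightarrow> (complex \<Rightarrow> complex vec) \<Rightarrow> complex \<Rightarrow> nat \<Rightarrow> bool" where
  "zero_order \<Omega> n f lam0 k \<longleftrightarrow> (\<exists>U g. open U \<and> lam0 \<in> U \<and> U \<subseteq> \<Omega> \<and> vec_holo U n g \<and>
     g lam0 \<noteq> 0\<^sub>v n \<and> (\<forall>z\<in>U. f z = ((z - lam0) ^ k) \<cdot>\<^sub>v g z))"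

definition root_function :: "complex set \<Rightarrow> nat \<Rightarrow> (complex \<Rightarrow> complex mat) \<Rightarrow> complex \<Rightarrow> (complex \<Rightarrow> complex vec) \<Rightarrow> bool" where
  "root_function \<Omega> n T lam0 y \<longleftrightarrow> vec_holo \<Omega> n y \<and> y lam0 \<noteq> 0\<^sub>v n \<and> T lam0 *\<^sub>v y lam0 = 0\<^sub>v n"

definition root_mult :: "complex set \<Rightarrow> nat \<Rightarrow> (complex \<Rightarrow> complex mat) \<Rightarrow> complex \<Rightarrow> (complex \<Rightarrow> complex vec) \<Rightarrow> nat \<Rightarrow> bool" where
  "root_mult \<Omega> n T lam0 y k \<longleftrightarrow> zero_order \<Omega> n (\<lambda>z. T z *\<^sub>v y z) lam0 k"

text \<open>Left root function: row vector v (represented as a column vector) with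
  v(lam0) T(lam0) = 0; its multiplicity is the order of the zero of vT (= T^t v transposed).\<close>
definition left_root_function :: "complex set \<Rightarrow> nat \<Rightarrow> (complex \<Rightarrow> complex mat) \<Rightarrow> complex \<Rightarrow> (complex \<Rightarrow> complex vec) \<Rightarrow> bool" where
  "left_root_function \<Omega> n T lam0 v \<longleftrightarrow> vec_holo \<Omega> n v \<and> v lam0 \<noteq> 0\<^sub>v n \<and>
     transpose_mat (T lam0) *\<^sub>v v lam0 = 0\<^sub>v n"

definition left_root_mult :: "complex set \<Rightarrow> nat \<Rightarrow> (complex \<Rightarrow> complex mat) \<Rightarrow> complex \<Rightarrow> (complex \<Rightarrow> complex vec) \<Rightarrow> nat \<Rightarrow> bool" where
  "left_root_mult \<Omega> n T lam0 v k \<longleftrightarrow> zero_order \<Omega> n (\<lambda>z. transpose_mat (T z) *\<^sub>v v z) lam0 k"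

definition right_canonical :: "complex set \<Rightarrow> nat \<Rightarrow> (complex \<Rightarrow> complex mat) \<Rightarrow> complex \<Rightarrow> nat list \<Rightarrow> nat \<Rightarrow> (complex \<Rightarrow> complex mat) \<Rightarrow> bool" where
  "right_canonical \<Omega> n T lam0 ms r Y \<longleftrightarrow> mat_holo \<Omega> n r Y \<and>
     (\<forall>i<r. root_function \<Omega> n T lam0 (\<lambda>z. col (Y z) i)) \<and>
     (\<forall>c \<in> carrier_vec r. Y lam0 *\<^sub>v c = 0\<^sub>v n \<longrightarrow> c = 0\<^sub>v r) \<and>
     (\<exists>nus. length nus = r \<and> (\<forall>i<r. root_mult \<Omega> n T lam0 (\<lambda>z. col (Y z) i) (nus ! i)) \<and>
        (\<Sum>i<r. nus ! i) = (\<Sum>i<r. ms ! i) \<and> sorted_wrt (\<ge>) nus)"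

definition left_canonical :: "complex set \<Rightarrow> nat \<Rightarrow> (complex \<Rightarrow> complex mat) \<Rightarrow> complex \<Rightarrow> nat list \<Rightarrow> nat \<Rightarrow> (complex \<Rightarrow> complex mat) \<Rightarrow> bool" where
  "left_canonical \<Omega> n T lam0 ms r V \<longleftrightarrow> mat_holo \<Omega> r n V \<and>
     (\<forall>i<r. left_root_function \<Omega> n T lam0 (\<lambda>z. row (V z) i)) \<and>
     (\<forall>c \<in> carrier_vec r. transpose_mat (V lam0) *\<^sub>v c = 0\<^sub>v n \<longrightarrow> c = 0\<^sub>v r) \<and>
     (\<exists>nus. length nus = r \<and> (\<forall>i<r. left_root_mult \<Omega> n T lam0 (\<lambda>z. row (V z) i) (nus ! i)) \<and>
        (\<Sum>i<r. nus ! i) = (\<Sum>i<r. ms ! i) \<and> sorted_wrt (\<ge>) nus)"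

end

theory Submission
  imports Defs
begin

text \<open>Write the local Smith form as \<open>P T Q = \<Delta>\<close> with \<open>P\<close>, \<open>Q\<close> unimodular, and the rows of the
  left canonical matrix as \<open>v\<^sub>i T = (z - lam0)^\<nu>\<^sub>i g\<^sub>i\<close>, i.e. \<open>V T = diag((z - lam0)^\<nu>\<^sub>i) G\<close>.
  Then \<open>V P\<^sup>-\<^sup>1 \<Delta> = diag((z - lam0)^\<nu>\<^sub>i) G Q\<close>, so the \<open>(i,j)\<close> entry of \<open>V P\<^sup>-\<^sup>1\<close> vanishes at
  \<open>lam0\<close> whenever \<open>m\<^sub>j < \<nu>\<^sub>i\<close>. As the rows of \<open>V(lam0)\<close> are independent and both \<open>m\<close> and \<open>\<nu>\<close>
  are non-increasing, this forces \<open>\<nu>\<^sub>i \<le> m\<^sub>i\<close>, and equal sums give \<open>\<nu> = m\<close>.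
  Hence \<open>\<Delta>\<^sup>-\<^sup>1 V T Y = (G Q)(Q\<^sup>-\<^sup>1 Y)\<close> is holomorphic. At \<open>lam0\<close> the rows of \<open>Q\<^sup>-\<^sup>1 Y\<close> beyond
  the \<open>r\<close>-th vanish (because \<open>T(lam0) Y(lam0) = 0\<close>), so its value there is the product of the leading
  \<open>r \<times> r\<close> blocks of \<open>G Q\<close> and \<open>Q\<^sup>-\<^sup>1 Y\<close>. The second block is invertible since \<open>Y(lam0)\<close> has
  independent columns; the first is conjugate by \<open>\<Delta>\<close> to the leading block of \<open>V P\<^sup>-\<^sup>1\<close> away from
  \<open>lam0\<close>, so by continuity its determinant is that of the leading block of \<open>V P\<^sup>-\<^sup>1 (lam0)\<close>, which
  is nonzero for the same reason. Transposition exchanges left and right canonical matrices and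
  yields the statement for \<open>V T Y \<Delta>\<^sup>-\<^sup>1\<close>.\<close>

lemma index_mult_mat_sum:
  assumes "A \<in> carrier_mat a b" "B \<in> carrier_mat b c" "i < a" "j < c"
  shows "(A * B) $$ (i,j) = (\<Sum>k<b. A $$ (i,k) * B $$ (k,j))"
  using assms by (auto simp: scalar_prod_def atLeast0LessThan intro!: sum.cong)

lemma index_mult_mat_vec_sum:
  assumes "A \<in> carrier_mat a b" "v \<in> carrier_vec b" "i < a"
  shows "(A *\<^sub>v v) $ i = (\<Sum>k<b. A $$ (i,k) * v $ k)"
  using assms by (auto simp: scalar_prod_def atLeast0LessThan intro!: sum.cong)

lemma index_mult_mat_as_row:
  fixes V T :: "'a :: comm_semiring_0 mat"
  assumes "V \<in> carrier_mat r n" "T \<in> carrier_mat n n" "i < r" "j < n"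
  shows "(V * T) $$ (i,j) = (transpose_mat T *\<^sub>v row V i) $ j"
proof -
  have "row V i \<in> carrier_vec n" "col T j \<in> carrier_vec n" using assms by auto
  then show ?thesis using assms by (simp add: comm_scalar_prod[of "row V i" n "col T j"])
qed

lemma mult_mat_vec_zero:
  "A \<in> carrier_mat m n \<Longrightarrow> A *\<^sub>v 0\<^sub>v n = 0\<^sub>v m"
  by (intro eq_vecI) (auto simp: scalar_prod_def)

lemma mult_mat_cancel_left:
  fixes A :: "'a :: semiring_1 mat"
  assumes "A \<in> carrier_mat n n" "A' \<in> carrier_mat n n" "A' * A = 1\<^sub>m n" "X \<in> carrier_mat n m"
  shows "A' * (A * X) = X"
proof -
  have "A' * (A * X) = A' * A * X" using assoc_mult_mat[OF assms(2,1,4)] by simp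
  also have "\<dots> = X" using assms by (simp add: left_mult_one_mat)
  finally show ?thesis .
qed

lemma mult_mat_vec_cancel_left:
  fixes A :: "'a :: semiring_1 mat"
  assumes "A \<in> carrier_mat n n" "A' \<in> carrier_mat n n" "A' * A = 1\<^sub>m n" "v \<in> carrier_vec n"
  shows "A' *\<^sub>v (A *\<^sub>v v) = v"
proof -
  have "A' *\<^sub>v (A *\<^sub>v v) = (A' * A) *\<^sub>v v" using assoc_mult_mat_vec[OF assms(2,1,4)] by simp
  also have "\<dots> = v" using assms by simp
  finally show ?thesis .
qed

lemma transpose_mult_mult:
  fixes A B C :: "'a :: comm_semiring_0 mat"
  assumes "A \<in> carrier_mat a b" "B \<in> carrier_mat b c" "C \<in> carrier_mat c d"
  shows "transpose_mat (A * B * C) = transpose_mat C * transpose_mat B * transpose_mat A"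
proof -
  have "transpose_mat (A * B * C) = transpose_mat C * transpose_mat (A * B)"
    by (rule transpose_mult) (use assms in auto)
  also have "transpose_mat (A * B) = transpose_mat B * transpose_mat A"
    by (rule transpose_mult[OF assms(1,2)])
  also have "transpose_mat C * (transpose_mat B * transpose_mat A)
      = transpose_mat C * transpose_mat B * transpose_mat A"
    by (rule assoc_mult_mat[symmetric]) (use assms in auto)
  finally show ?thesis .
qed

lemma kernel_dim_zero_mat: "kernel.dim k (0\<^sub>m k k :: complex mat) = k"
proof -
  interpret kernel k k "0\<^sub>m k k :: complex mat" by unfold_locales simp
  have ref: "row_echelon_form (0\<^sub>m k k :: complex mat)"
    unfolding row_echelon_form_def by (intro exI[of _ "\<lambda>_. k"] pivot_funI) auto
  have no_rows: "{i. i < k \<and> row (0\<^sub>m k k :: complex mat) i \<noteq> 0\<^sub>v k} = {}" by auto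
  have basis: "basis (set (find_base_vectors (0\<^sub>m k k :: complex mat)))"
    using find_base_vectors(3)[OF ref zero_carrier_mat] .
  have "card (set (find_base_vectors (0\<^sub>m k k :: complex mat))) = k"
    using find_base_vectors(4)[OF ref zero_carrier_mat] unfolding no_rows by simp
  then show ?thesis using Ker.dim_basis[OF finite_set basis] by simp
qed

lemma kernel_dim_mult_invertible:
  fixes B :: "'a :: field mat"
  assumes "A \<in> carrier_mat n n" "A' \<in> carrier_mat n n" "A' * A = 1\<^sub>m n" "B \<in> carrier_mat n n"
    and "C \<in> carrier_mat n n" "C' \<in> carrier_mat n n" "C * C' = 1\<^sub>m n"
  shows "kernel.dim n (A * B * C) = kernel.dim n B"
proof -
  have "kernel.dim n (A * B * C) = kernel.dim n (A * B)"
    using assms by (intro mat_kernel_dim_mult_eq_right) auto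
  also have "\<dots> = kernel.dim n B"
    using mat_kernel_mult_eq[OF assms(4,1,2,3)] by simp
  finally show ?thesis .
qed

definition leading_block :: "nat \<Rightarrow> 'a mat \<Rightarrow> 'a mat" where
  "leading_block k A = mat k k (\<lambda>(i,j). A $$ (i,j))"

lemma leading_block_carrier [simp]: "leading_block k A \<in> carrier_mat k k"
  by (simp add: leading_block_def)

lemma dim_leading_block [simp]:
  "dim_row (leading_block k A) = k" "dim_col (leading_block k A) = k"
  by (simp_all add: leading_block_def)

lemma index_leading_block [simp]: "i < k \<Longrightarrow> j < k \<Longrightarrow> leading_block k A $$ (i,j) = A $$ (i,j)"
  by (simp add: leading_block_def)

lemma transpose_leading_block:
  "A \<in> carrier_mat a b \<Longrightarrow> k \<le> a \<Longrightarrow> k \<le> b \<Longrightarrow>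
    leading_block k (transpose_mat A) = transpose_mat (leading_block k A)"
  by (rule eq_matI) (auto simp: leading_block_def)

lemma mult_eq_leading_blocks:
  fixes A B :: "'a :: semiring_0 mat"
  assumes A: "A \<in> carrier_mat r n" and B: "B \<in> carrier_mat n r" and "r \<le> n"
    and zero: "\<And>j b. r \<le> j \<Longrightarrow> j < n \<Longrightarrow> b < r \<Longrightarrow> B $$ (j,b) = 0"
  shows "A * B = leading_block r A * leading_block r B"
proof (rule eq_matI)
  fix a b assume "a < dim_row (leading_block r A * leading_block r B)"
    and "b < dim_col (leading_block r A * leading_block r B)"
  then have ab: "a < r" "b < r" by auto
  have "(A * B) $$ (a,b) = (\<Sum>j<n. A $$ (a,j) * B $$ (j,b))"
    by (rule index_mult_mat_sum[OF A B ab])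
  also have "\<dots> = (\<Sum>j<r. A $$ (a,j) * B $$ (j,b))"
    by (rule sum.mono_neutral_right) (use \<open>r \<le> n\<close> zero ab in auto)
  also have "\<dots> = (leading_block r A * leading_block r B) $$ (a,b)"
    using ab by (simp add: index_mult_mat_sum[OF leading_block_carrier leading_block_carrier ab])
  finally show "(A * B) $$ (a,b) = (leading_block r A * leading_block r B) $$ (a,b)" .
qed (use A B in auto)

lemma kernel_vector_from_leading_block:
  fixes B :: "'a :: idom mat"
  assumes B: "B \<in> carrier_mat n r" and "k \<le> r"
    and zero: "\<And>j b. k \<le> j \<Longrightarrow> j < n \<Longrightarrow> b < k \<Longrightarrow> B $$ (j,b) = 0"
    and det0: "det (leading_block k B) = 0"
  obtains c where "c \<in> carrier_vec r" "c \<noteq> 0\<^sub>v r" "B *\<^sub>v c = 0\<^sub>v n"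
proof -
  obtain c' where c': "c' \<in> carrier_vec k" "c' \<noteq> 0\<^sub>v k" "leading_block k B *\<^sub>v c' = 0\<^sub>v k"
    using det_0_iff_vec_prod_zero[OF leading_block_carrier] det0 by blast
  define c where "c = vec r (\<lambda>i. if i < k then c' $ i else 0)"
  have "c \<noteq> 0\<^sub>v r"
  proof
    assume c0: "c = 0\<^sub>v r"
    have "c' $ i = 0" if "i < k" for i
    proof -
      have "i < r" using that \<open>k \<le> r\<close> by simp
      then have "c' $ i = c $ i" using that by (simp add: c_def)
      then show ?thesis using c0 \<open>i < r\<close> by simp
    qed
    then show False using c' by (auto intro!: eq_vecI)
  qed
  moreover have "B *\<^sub>v c = 0\<^sub>v n"
  proof (rule eq_vecI)
    fix j assume "j < dim_vec (0\<^sub>v n)"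
    then have j: "j < n" by simp
    have "(B *\<^sub>v c) $ j = (\<Sum>b<r. B $$ (j,b) * c $ b)"
      by (rule index_mult_mat_vec_sum[OF B _ j]) (simp add: c_def)
    also have "\<dots> = (\<Sum>b<k. B $$ (j,b) * c' $ b)"
      using \<open>k \<le> r\<close> by (subst sum.mono_neutral_right[of "{..<r}" "{..<k}"]) (auto simp: c_def)
    also have "\<dots> = 0"
    proof (cases "j < k")
      case True
      have "(leading_block k B *\<^sub>v c') $ j = (\<Sum>b<k. leading_block k B $$ (j,b) * c' $ b)"
        by (rule index_mult_mat_vec_sum[OF leading_block_carrier c'(1) True])
      also have "\<dots> = (\<Sum>b<k. B $$ (j,b) * c' $ b)"
        using True by (intro sum.cong) auto
      finally show ?thesis using c'(3) True by simp
    qed (use zero j in simp)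
    finally show "(B *\<^sub>v c) $ j = 0\<^sub>v n $ j" using j by simp
  qed (use B in simp)
  moreover have "c \<in> carrier_vec r" by (simp add: c_def)
  ultimately show ?thesis using that by blast
qed

lemma det_leading_block_nonzero:
  fixes B :: "'a :: idom mat"
  assumes B: "B \<in> carrier_mat n r"
    and zero: "\<And>j b. r \<le> j \<Longrightarrow> j < n \<Longrightarrow> b < r \<Longrightarrow> B $$ (j,b) = 0"
    and inj: "\<And>c. c \<in> carrier_vec r \<Longrightarrow> B *\<^sub>v c = 0\<^sub>v n \<Longrightarrow> c = 0\<^sub>v r"
  shows "det (leading_block r B) \<noteq> 0"
proof
  assume "det (leading_block r B) = 0"
  then obtain c where "c \<in> carrier_vec r" "c \<noteq> 0\<^sub>v r" "B *\<^sub>v c = 0\<^sub>v n"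
    using kernel_vector_from_leading_block[OF B order.refl zero] by blast
  then show False using inj by blast
qed

lemma kernel_vector_if_zero_corner:
  fixes B :: "'a :: idom mat"
  assumes B: "B \<in> carrier_mat n r" and "k < r" "k < n"
    and zero: "\<And>i j. i \<le> k \<Longrightarrow> k \<le> j \<Longrightarrow> j < n \<Longrightarrow> B $$ (j,i) = 0"
  obtains c where "c \<in> carrier_vec r" "c \<noteq> 0\<^sub>v r" "B *\<^sub>v c = 0\<^sub>v n"
proof (rule kernel_vector_from_leading_block[OF B])
  let ?L = "leading_block (Suc k) B"
  have "?L = mat\<^sub>r (Suc k) (Suc k) (\<lambda>i. if i = k then 0\<^sub>v (Suc k) else row ?L i)"
    by (rule eq_matI) (use zero \<open>k < n\<close> in \<open>auto simp: less_Suc_eq_le\<close>)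
  also have "det \<dots> = 0" by (rule det_row_0) auto
  finally show "det ?L = 0" .
qed (use assms in auto)

lemma sorted_desc_nat_split:
  assumes "sorted_wrt (\<ge>) (xs :: nat list)"
  obtains k where "k \<le> length xs" "\<And>i. i < k \<Longrightarrow> xs ! i > 0"
    "\<And>i. k \<le> i \<Longrightarrow> i < length xs \<Longrightarrow> xs ! i = 0"
proof -
  have "\<exists>k\<le>length xs. (\<forall>i<k. xs ! i > 0) \<and> (\<forall>i. k \<le> i \<longrightarrow> i < length xs \<longrightarrow> xs ! i = 0)"
    using assms
  proof (induction xs)
    case (Cons x xs)
    then obtain k where k: "k \<le> length xs" "\<forall>i<k. xs ! i > 0"
      "\<forall>i. k \<le> i \<longrightarrow> i < length xs \<longrightarrow> xs ! i = 0"
      by auto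
    show ?case
    proof (cases "x = 0")
      case True
      then have "\<forall>y\<in>set xs. y = 0" using Cons.prems by auto
      then show ?thesis using True by (intro exI[of _ 0]) (auto simp: nth_Cons split: nat.split)
    next
      case False
      then show ?thesis
        using k by (intro exI[of _ "Suc k"]) (auto simp: nth_Cons split: nat.split)
    qed
  qed simp
  then show ?thesis using that by blast
qed


section \<open>Holomorphic matrix functions\<close>

lemma mat_holo_carrier: "mat_holo S a b M \<Longrightarrow> z \<in> S \<Longrightarrow> M z \<in> carrier_mat a b"
  unfolding mat_holo_def by blast

lemma mat_holo_index: "mat_holo S a b M \<Longrightarrow> i < a \<Longrightarrow> j < b \<Longrightarrow> (\<lambda>z. M z $$ (i,j)) holomorphic_on S"
  unfolding mat_holo_def by blast

lemma mat_holo_subset: "mat_holo S a b M \<Longrightarrow> S' \<subseteq> S \<Longrightarrow> mat_holo S' a b M"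
  unfolding mat_holo_def using holomorphic_on_subset by blast

lemma mat_holo_entrywise:
  assumes "\<And>z. z \<in> S \<Longrightarrow> M z \<in> carrier_mat a b"
    and "\<And>i j. i < a \<Longrightarrow> j < b \<Longrightarrow> f i j holomorphic_on S"
    and "\<And>z i j. z \<in> S \<Longrightarrow> i < a \<Longrightarrow> j < b \<Longrightarrow> M z $$ (i,j) = f i j z"
  shows "mat_holo S a b M"
  unfolding mat_holo_def
proof (intro conjI ballI allI impI)
  fix i j assume "i < a" "j < b"
  then show "(\<lambda>z. M z $$ (i,j)) holomorphic_on S"
    using assms(2,3) by (auto intro: holomorphic_transform[of "f i j"])
qed (use assms(1) in blast)

lemma mat_holo_mult:
  assumes A: "mat_holo S a b A" and B: "mat_holo S b c B"
  shows "mat_holo S a c (\<lambda>z. A z * B z)"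
proof (rule mat_holo_entrywise)
  fix z assume "z \<in> S"
  then show "A z * B z \<in> carrier_mat a c"
    using mat_holo_carrier[OF A] mat_holo_carrier[OF B] by (meson mult_carrier_mat)
next
  fix z i j assume "z \<in> S" "i < a" "j < c"
  then show "(A z * B z) $$ (i,j) = (\<Sum>k<b. A z $$ (i,k) * B z $$ (k,j))"
    using index_mult_mat_sum mat_holo_carrier[OF A \<open>z \<in> S\<close>] mat_holo_carrier[OF B \<open>z \<in> S\<close>]
    by blast
qed (use mat_holo_index[OF A] mat_holo_index[OF B] in \<open>auto intro!: holomorphic_intros\<close>)

lemma mat_holo_smult:
  assumes f: "f holomorphic_on S" and M: "mat_holo S a b M"
  shows "mat_holo S a b (\<lambda>z. f z \<cdot>\<^sub>m M z)"
proof (rule mat_holo_entrywise)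
  fix z assume "z \<in> S"
  then show "f z \<cdot>\<^sub>m M z \<in> carrier_mat a b" using mat_holo_carrier[OF M] by simp
next
  fix z i j assume "z \<in> S" "i < a" "j < b"
  then show "(f z \<cdot>\<^sub>m M z) $$ (i,j) = f z * M z $$ (i,j)"
    using mat_holo_carrier[OF M \<open>z \<in> S\<close>] by auto
qed (use mat_holo_index[OF M] f in \<open>auto intro!: holomorphic_intros\<close>)

lemma mat_holo_transpose:
  assumes M: "mat_holo S a b M"
  shows "mat_holo S b a (\<lambda>z. transpose_mat (M z))"
proof (rule mat_holo_entrywise)
  fix z assume "z \<in> S"
  then show "transpose_mat (M z) \<in> carrier_mat b a" using mat_holo_carrier[OF M] by simp
next
  fix z i j assume "z \<in> S" "i < b" "j < a"
  then show "transpose_mat (M z) $$ (i,j) = M z $$ (j,i)"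
    using mat_holo_carrier[OF M \<open>z \<in> S\<close>] by auto
qed (use mat_holo_index[OF M] in auto)

lemma mat_holo_transpose_iff:
  "mat_holo S b a (\<lambda>z. transpose_mat (M z)) \<longleftrightarrow> mat_holo S a b M"
  using mat_holo_transpose[of S b a "\<lambda>z. transpose_mat (M z)"] mat_holo_transpose[of S a b M] by auto

lemma mat_holo_leading_block:
  assumes M: "mat_holo S a b M" and "k \<le> a" "k \<le> b"
  shows "mat_holo S k k (\<lambda>z. leading_block k (M z))"
  by (rule mat_holo_entrywise[where f = "\<lambda>i j z. M z $$ (i,j)"])
    (use assms mat_holo_index[OF M] in auto)

lemma holomorphic_on_det:
  assumes M: "mat_holo S k k M"
  shows "(\<lambda>z. det (M z)) holomorphic_on S"
proof -
  have "(\<lambda>z. \<Sum>p \<in> {p. p permutes {0..<k}}. signof p * (\<Prod>i = 0..<k. M z $$ (i, p i))) holomorphic_on S"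
  proof (intro holomorphic_intros)
    fix p i assume "p \<in> {p. p permutes {0..<k}}" and i: "i \<in> {0..<k}"
    then have "p i < k" using permutes_in_image by fastforce
    then show "(\<lambda>z. M z $$ (i, p i)) holomorphic_on S" using mat_holo_index[OF M] i by auto
  qed
  then show ?thesis
    by (rule holomorphic_transform) (simp add: det_def'[OF mat_holo_carrier[OF M]])
qed

lemma mat_holo_mat_delete:
  assumes M: "mat_holo S k k M" and ij: "i < k" "j < k"
  shows "mat_holo S (k - 1) (k - 1) (\<lambda>z. mat_delete (M z) i j)"
proof (rule mat_holo_entrywise)
  fix z assume "z \<in> S"
  then show "mat_delete (M z) i j \<in> carrier_mat (k - 1) (k - 1)"
    using mat_delete_carrier[OF mat_holo_carrier[OF M \<open>z \<in> S\<close>]] by simp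
next
  fix z a b assume "z \<in> S" "a < k - 1" "b < k - 1"
  then show "mat_delete (M z) i j $$ (a,b) = M z $$ (insert_index i a, insert_index j b)"
    using mat_delete_index[of "M z" "k - 1" i j a b] mat_holo_carrier[OF M] ij by auto
qed (use mat_holo_index[OF M] in \<open>auto simp: insert_index_def\<close>)

lemma mat_holo_adj_mat:
  assumes M: "mat_holo S k k M"
  shows "mat_holo S k k (\<lambda>z. adj_mat (M z))"
proof (rule mat_holo_entrywise)
  fix z assume "z \<in> S"
  then show "adj_mat (M z) \<in> carrier_mat k k" using mat_holo_carrier[OF M] adj_mat(1) by blast
next
  fix z i j assume "z \<in> S" "i < k" "j < k"
  then show "adj_mat (M z) $$ (i,j) = (- 1) ^ (j + i) * det (mat_delete (M z) j i)"
    using mat_holo_carrier[OF M \<open>z \<in> S\<close>] by (auto simp: adj_mat_def cofactor_def)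
qed (auto intro!: holomorphic_intros holomorphic_on_det mat_holo_mat_delete[OF M])

lemma unimodular0_if_det_nonzero:
  assumes S: "open S" "lam0 \<in> S" and M: "mat_holo S k k M" and det0: "det (M lam0) \<noteq> 0"
  shows "unimodular0 lam0 k M"
proof -
  define S' where "S' = S \<inter> (\<lambda>z. det (M z)) -` (- {0})"
  have det_holo: "(\<lambda>z. det (M z)) holomorphic_on S" by (rule holomorphic_on_det[OF M])
  have "open S'" unfolding S'_def
    by (rule continuous_open_preimage) (use holomorphic_on_imp_continuous_on[OF det_holo] S in auto)
  moreover have "lam0 \<in> S'" "S' \<subseteq> S" using S det0 unfolding S'_def by auto
  moreover have "mat_holo S' k k (\<lambda>z. (1 / det (M z)) \<cdot>\<^sub>m adj_mat (M z))"
    by (intro mat_holo_smult holomorphic_intros mat_holo_subset[OF mat_holo_adj_mat[OF M]]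
        holomorphic_on_subset[OF det_holo]) (auto simp: S'_def)
  moreover have "M z * ((1 / det (M z)) \<cdot>\<^sub>m adj_mat (M z)) = 1\<^sub>m k \<and>
      (1 / det (M z)) \<cdot>\<^sub>m adj_mat (M z) * M z = 1\<^sub>m k" if "z \<in> S'" for z
  proof -
    have Mz: "M z \<in> carrier_mat k k" and "det (M z) \<noteq> 0"
      using that mat_holo_carrier[OF M] unfolding S'_def by auto
    then show ?thesis
      by (auto simp: adj_mat mult_smult_distrib[OF Mz adj_mat(1)[OF Mz]]
          mult_smult_assoc_mat[OF adj_mat(1)[OF Mz] Mz] intro!: eq_matI)
  qed
  ultimately show ?thesis
    unfolding unimodular0_def by (meson mat_holo_subset[OF M])
qed

lemma unimodular0_transpose:
  assumes "unimodular0 lam0 n M"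
  shows "unimodular0 lam0 n (\<lambda>z. transpose_mat (M z))"
proof -
  obtain U M' where U: "open U" "lam0 \<in> U" and M: "mat_holo U n n M" and M': "mat_holo U n n M'"
    and inv: "\<forall>z\<in>U. M z * M' z = 1\<^sub>m n \<and> M' z * M z = 1\<^sub>m n"
    using assms unfolding unimodular0_def by blast
  have "transpose_mat (M z) * transpose_mat (M' z) = 1\<^sub>m n \<and>
      transpose_mat (M' z) * transpose_mat (M z) = 1\<^sub>m n" if "z \<in> U" for z
    using inv that transpose_mult[OF mat_holo_carrier[OF M that] mat_holo_carrier[OF M' that]]
      transpose_mult[OF mat_holo_carrier[OF M' that] mat_holo_carrier[OF M that]]
    by (metis transpose_one)
  then show ?thesis
    unfolding unimodular0_def using U mat_holo_transpose[OF M] mat_holo_transpose[OF M'] by blast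
qed

lemma continuous_on_eq_at_punctured:
  fixes f g :: "complex \<Rightarrow> complex"
  assumes "open S" "a \<in> S" "continuous_on S f" "continuous_on S g"
    and "\<And>z. z \<in> S - {a} \<Longrightarrow> f z = g z"
  shows "f a = g a"
proof -
  have "(f \<longlongrightarrow> f a) (at a)" "(g \<longlongrightarrow> g a) (at a)"
    using assms continuous_on_eq_continuous_at isCont_def by blast+
  moreover have "eventually (\<lambda>z. f z = g z) (at a)"
    using assms(1,2,5) eventually_at_topological by blast
  ultimately show ?thesis
    by (metis (mono_tags, lifting) tendsto_cong tendsto_unique trivial_limit_at)
qed


section \<open>Diagonal matrices of powers of \<open>z - lam0\<close>\<close>

lemma Delta_carrier [simp]: "Delta lam0 ms k z \<in> carrier_mat k k"
  by (simp add: Delta_def)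

lemma Delta_inv_carrier [simp]: "Delta_inv lam0 ms k z \<in> carrier_mat k k"
  by (simp add: Delta_inv_def)

lemma dim_Delta [simp]:
  "dim_row (Delta lam0 ms k z) = k" "dim_col (Delta lam0 ms k z) = k"
  "dim_row (Delta_inv lam0 ms k z) = k" "dim_col (Delta_inv lam0 ms k z) = k"
  by (simp_all add: Delta_def Delta_inv_def)

lemma transpose_Delta [simp]: "transpose_mat (Delta lam0 ms k z) = Delta lam0 ms k z"
  by (rule eq_matI) (auto simp: Delta_def)

lemma transpose_Delta_inv [simp]: "transpose_mat (Delta_inv lam0 ms k z) = Delta_inv lam0 ms k z"
  by (rule eq_matI) (auto simp: Delta_inv_def)

lemma index_Delta_mult:
  assumes "X \<in> carrier_mat k c" "a < k" "b < c"
  shows "(Delta lam0 ms k z * X) $$ (a,b) = (z - lam0) ^ (ms ! a) * X $$ (a,b)"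
proof -
  have "(Delta lam0 ms k z * X) $$ (a,b) = (\<Sum>j<k. Delta lam0 ms k z $$ (a,j) * X $$ (j,b))"
    by (rule index_mult_mat_sum) (use assms in auto)
  also have "\<dots> = (\<Sum>j<k. if j = a then (z - lam0) ^ (ms ! a) * X $$ (a,b) else 0)"
    by (rule sum.cong) (use assms in \<open>auto simp: Delta_def\<close>)
  finally show ?thesis using assms by simp
qed

lemma index_mult_Delta:
  assumes "X \<in> carrier_mat c k" "a < c" "b < k"
  shows "(X * Delta lam0 ms k z) $$ (a,b) = X $$ (a,b) * (z - lam0) ^ (ms ! b)"
proof -
  have "(X * Delta lam0 ms k z) $$ (a,b) = (\<Sum>j<k. X $$ (a,j) * Delta lam0 ms k z $$ (j,b))"
    by (rule index_mult_mat_sum) (use assms in auto)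
  also have "\<dots> = (\<Sum>j<k. if j = b then X $$ (a,b) * (z - lam0) ^ (ms ! b) else 0)"
    by (rule sum.cong) (use assms in \<open>auto simp: Delta_def\<close>)
  finally show ?thesis using assms by simp
qed

lemma index_Delta_inv_mult:
  assumes "X \<in> carrier_mat k c" "a < k" "b < c"
  shows "(Delta_inv lam0 ms k z * X) $$ (a,b) = X $$ (a,b) / (z - lam0) ^ (ms ! a)"
proof -
  have "(Delta_inv lam0 ms k z * X) $$ (a,b) = (\<Sum>j<k. Delta_inv lam0 ms k z $$ (a,j) * X $$ (j,b))"
    by (rule index_mult_mat_sum) (use assms in auto)
  also have "\<dots> = (\<Sum>j<k. if j = a then X $$ (a,b) / (z - lam0) ^ (ms ! a) else 0)"
    by (rule sum.cong) (use assms in \<open>auto simp: Delta_inv_def\<close>)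
  finally show ?thesis using assms by simp
qed

lemma Delta_inv_mult_Delta: "z \<noteq> lam0 \<Longrightarrow> Delta_inv lam0 ms k z * Delta lam0 ms k z = 1\<^sub>m k"
proof (rule eq_matI)
  fix i j assume "z \<noteq> lam0" "i < dim_row (1\<^sub>m k)" "j < dim_col (1\<^sub>m k)"
  then show "(Delta_inv lam0 ms k z * Delta lam0 ms k z) $$ (i,j) = 1\<^sub>m k $$ (i,j)"
    using index_Delta_inv_mult[of "Delta lam0 ms k z" k k i j] by (auto simp: Delta_def)
qed (auto simp: Delta_inv_def Delta_def)

lemma det_Delta_conjugate:
  assumes "z \<noteq> lam0" and A: "A \<in> carrier_mat k k"
  shows "det (Delta_inv lam0 ms k z * A * Delta lam0 ms k z) = det A"
proof -
  have "det (Delta_inv lam0 ms k z * A * Delta lam0 ms k z)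
      = det (Delta_inv lam0 ms k z) * det A * det (Delta lam0 ms k z)"
    using det_mult[OF mult_carrier_mat[OF Delta_inv_carrier A] Delta_carrier]
      det_mult[OF Delta_inv_carrier A] by simp
  also have "\<dots> = det A * det (Delta_inv lam0 ms k z * Delta lam0 ms k z)"
    by (simp add: det_mult[of _ k])
  finally show ?thesis using Delta_inv_mult_Delta[OF assms(1)] by simp
qed

lemma kernel_dim_Delta_center:
  assumes "k \<le> n" "\<And>i. i < k \<Longrightarrow> ms ! i > 0" "\<And>i. k \<le> i \<Longrightarrow> i < n \<Longrightarrow> ms ! i = 0"
  shows "kernel.dim n (Delta lam0 ms n lam0) = k"
proof -
  have "Delta lam0 ms n lam0 = four_block_mat (0\<^sub>m k k) (0\<^sub>m k (n - k)) (0\<^sub>m (n - k) k) (1\<^sub>m (n - k))"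
    by (rule eq_matI) (use assms in \<open>auto simp: Delta_def\<close>)
  then have "kernel.dim (k + (n - k)) (Delta lam0 ms n lam0)
      = kernel.dim k (0\<^sub>m k k :: complex mat) + kernel.dim (n - k) (1\<^sub>m (n - k) :: complex mat)"
    by (rule kernel_four_block_0_mat) auto
  then show ?thesis
    using assms(1) kernel_dim_zero_mat[of k] kernel_one_mat(1)[of "n - k", where 'a = complex] by simp
qed

lemma kernel_dim_center:
  assumes "lam0 \<in> \<Omega>" "mat_holo \<Omega> n n T" "partial_mults \<Omega> n T lam0 ms"
    and "k \<le> n" "\<And>i. i < k \<Longrightarrow> 0 < ms ! i" "\<And>i. k \<le> i \<Longrightarrow> i < n \<Longrightarrow> ms ! i = 0"
  shows "kernel_dim (T lam0) = k"
proof -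
  obtain L R U where L: "unimodular0 lam0 n L" and R: "unimodular0 lam0 n R"
    and U: "lam0 \<in> U" and smith: "\<forall>z\<in>U \<inter> \<Omega>. L z * T z * R z = Delta lam0 ms n z"
    using assms(3) unfolding partial_mults_def by blast
  obtain UL L' where UL: "lam0 \<in> UL" "mat_holo UL n n L" "mat_holo UL n n L'"
    and L': "\<forall>z\<in>UL. L z * L' z = 1\<^sub>m n \<and> L' z * L z = 1\<^sub>m n"
    using L unfolding unimodular0_def by blast
  obtain UR R' where UR: "lam0 \<in> UR" "mat_holo UR n n R" "mat_holo UR n n R'"
    and R': "\<forall>z\<in>UR. R z * R' z = 1\<^sub>m n \<and> R' z * R z = 1\<^sub>m n"
    using R unfolding unimodular0_def by blast
  have T: "T lam0 \<in> carrier_mat n n" using mat_holo_carrier assms(1,2) by blast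
  have "kernel_dim (T lam0) = kernel.dim n (L lam0 * T lam0 * R lam0)"
    using kernel_dim_mult_invertible[OF mat_holo_carrier[OF UL(2,1)] mat_holo_carrier[OF UL(3,1)] _ T
        mat_holo_carrier[OF UR(2,1)] mat_holo_carrier[OF UR(3,1)]] L' R' UL(1) UR(1) T
    by (simp add: kernel_dim_def)
  also have "\<dots> = k"
    using smith U assms(1,4-) kernel_dim_Delta_center by simp
  finally show ?thesis .
qed


section \<open>Left and right canonical matrices\<close>

lemma vec_holo_cong:
  assumes "\<And>z. z \<in> S \<Longrightarrow> f z = g z"
  shows "vec_holo S n f = vec_holo S n g"
proof -
  have "((\<lambda>z. f z $ i) holomorphic_on S) = ((\<lambda>z. g z $ i) holomorphic_on S)" for i
    by (rule holomorphic_cong) (use assms in auto)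
  then show ?thesis using assms unfolding vec_holo_def by auto
qed

lemma zero_order_transfer:
  assumes "zero_order \<Omega> n f lam0 k" and "\<And>z. z \<in> \<Omega> \<Longrightarrow> f z = g z"
  shows "zero_order \<Omega> n g lam0 k"
proof -
  obtain U h where U: "open U" "lam0 \<in> U" "U \<subseteq> \<Omega>" "vec_holo U n h" "h lam0 \<noteq> 0\<^sub>v n"
    and f: "\<forall>z\<in>U. f z = ((z - lam0) ^ k) \<cdot>\<^sub>v h z"
    using assms(1) unfolding zero_order_def by blast
  have "\<forall>z\<in>U. g z = ((z - lam0) ^ k) \<cdot>\<^sub>v h z"
  proof
    fix z assume "z \<in> U"
    then have "z \<in> \<Omega>" using U(3) by blast
    then show "g z = ((z - lam0) ^ k) \<cdot>\<^sub>v h z" using f \<open>z \<in> U\<close> assms(2)[of z] by simp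
  qed
  then show ?thesis unfolding zero_order_def using U by blast
qed

lemma zero_order_cong:
  assumes "\<And>z. z \<in> \<Omega> \<Longrightarrow> f z = g z"
  shows "zero_order \<Omega> n f lam0 k = zero_order \<Omega> n g lam0 k"
  using zero_order_transfer[of \<Omega> n f lam0 k g] zero_order_transfer[of \<Omega> n g lam0 k f] assms by metis

lemma left_canonical_iff_right_canonical_transpose:
  assumes "lam0 \<in> \<Omega>"
  shows "left_canonical \<Omega> n T lam0 ms r V \<longleftrightarrow>
    right_canonical \<Omega> n (\<lambda>z. transpose_mat (T z)) lam0 ms r (\<lambda>z. transpose_mat (V z))"
proof -
  have col: "col (transpose_mat (V z)) i = row (V z) i" if "mat_holo \<Omega> r n V" "z \<in> \<Omega>" "i < r" for z i
    using mat_holo_carrier[OF that(1,2)] that(3) by simp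
  have root: "root_function \<Omega> n (\<lambda>z. transpose_mat (T z)) lam0 (\<lambda>z. col (transpose_mat (V z)) i)
      = left_root_function \<Omega> n T lam0 (\<lambda>z. row (V z) i)" if "mat_holo \<Omega> r n V" "i < r" for i
  proof -
    have "vec_holo \<Omega> n (\<lambda>z. col (transpose_mat (V z)) i) = vec_holo \<Omega> n (\<lambda>z. row (V z) i)"
      by (rule vec_holo_cong) (simp add: col that)
    then show ?thesis
      unfolding root_function_def left_root_function_def by (simp add: col that assms)
  qed
  have mult: "root_mult \<Omega> n (\<lambda>z. transpose_mat (T z)) lam0 (\<lambda>z. col (transpose_mat (V z)) i) k
      = left_root_mult \<Omega> n T lam0 (\<lambda>z. row (V z) i) k" if "mat_holo \<Omega> r n V" "i < r" for i k
    unfolding root_mult_def left_root_mult_def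
    by (rule zero_order_cong) (simp add: col[OF that(1) _ that(2)])
  show ?thesis
  proof (cases "mat_holo \<Omega> r n V")
    case True
    show ?thesis
      unfolding left_canonical_def right_canonical_def mat_holo_transpose_iff
      using root[OF True] mult[OF True] True by simp
  qed (simp add: left_canonical_def right_canonical_def mat_holo_transpose_iff)
qed

lemma right_canonical_center:
  assumes "lam0 \<in> \<Omega>" "mat_holo \<Omega> n n T" and RC: "right_canonical \<Omega> n T lam0 ms r Y"
  shows "T lam0 * Y lam0 = 0\<^sub>m n r"
proof -
  have Y: "Y lam0 \<in> carrier_mat n r" and T: "T lam0 \<in> carrier_mat n n"
    using assms RC mat_holo_carrier unfolding right_canonical_def by blast+
  show ?thesis
  proof (rule eq_matI)
    fix a b assume "a < dim_row (0\<^sub>m n r)" "b < dim_col (0\<^sub>m n r)"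
    then have ab: "a < n" "b < r" by auto
    have "T lam0 *\<^sub>v col (Y lam0) b = 0\<^sub>v n"
      using RC ab(2) unfolding right_canonical_def root_function_def by blast
    then have "(T lam0 *\<^sub>v col (Y lam0) b) $ a = 0" using ab by simp
    then show "(T lam0 * Y lam0) $$ (a,b) = 0\<^sub>m n r $$ (a,b)"
      using T Y ab by simp
  qed (use T Y in auto)
qed

lemma left_root_mult_pos:
  assumes "left_root_function \<Omega> n T lam0 v" and "left_root_mult \<Omega> n T lam0 v k"
  shows "0 < k"
proof (rule ccontr)
  obtain U g where "lam0 \<in> U" "g lam0 \<noteq> 0\<^sub>v n"
    and g: "\<forall>z\<in>U. transpose_mat (T z) *\<^sub>v v z = ((z - lam0) ^ k) \<cdot>\<^sub>v g z"
    using assms(2) unfolding left_root_mult_def zero_order_def by blast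
  moreover assume "\<not> 0 < k"
  ultimately have "transpose_mat (T lam0) *\<^sub>v v lam0 \<noteq> 0\<^sub>v n" by simp
  then show False using assms(1) unfolding left_root_function_def by blast
qed

lemma left_canonical_row_factors:
  assumes LC: "left_canonical \<Omega> n T lam0 ms r V"
  obtains U g nus where "length nus = r" "sorted_wrt (\<ge>) nus" "(\<Sum>i<r. nus ! i) = (\<Sum>i<r. ms ! i)"
    "\<And>i. i < r \<Longrightarrow> 0 < nus ! i"
    "\<And>i. i < r \<Longrightarrow> open (U i) \<and> lam0 \<in> U i \<and> U i \<subseteq> \<Omega> \<and> vec_holo (U i) n (g i)"
    "\<And>i z. i < r \<Longrightarrow> z \<in> U i \<Longrightarrow>
       transpose_mat (T z) *\<^sub>v row (V z) i = ((z - lam0) ^ (nus ! i)) \<cdot>\<^sub>v g i z"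
proof -
  have roots: "\<And>i. i < r \<Longrightarrow> left_root_function \<Omega> n T lam0 (\<lambda>z. row (V z) i)"
    using LC unfolding left_canonical_def by auto
  obtain nus where nus: "length nus = r" "sorted_wrt (\<ge>) nus" "(\<Sum>i<r. nus ! i) = (\<Sum>i<r. ms ! i)"
    and mults: "\<And>i. i < r \<Longrightarrow> left_root_mult \<Omega> n T lam0 (\<lambda>z. row (V z) i) (nus ! i)"
    using LC unfolding left_canonical_def by auto
  have "\<forall>i. \<exists>U g. i < r \<longrightarrow> (open U \<and> lam0 \<in> U \<and> U \<subseteq> \<Omega> \<and> vec_holo U n g \<and> g lam0 \<noteq> 0\<^sub>v n \<and>
      (\<forall>z\<in>U. transpose_mat (T z) *\<^sub>v row (V z) i = ((z - lam0) ^ (nus ! i)) \<cdot>\<^sub>v g z))"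
    using mults unfolding left_root_mult_def zero_order_def by blast
  then obtain U g where Ug: "\<And>i. i < r \<Longrightarrow> open (U i) \<and> lam0 \<in> U i \<and> U i \<subseteq> \<Omega> \<and>
      vec_holo (U i) n (g i) \<and> g i lam0 \<noteq> 0\<^sub>v n \<and>
      (\<forall>z\<in>U i. transpose_mat (T z) *\<^sub>v row (V z) i = ((z - lam0) ^ (nus ! i)) \<cdot>\<^sub>v g i z)"
    by metis
  show ?thesis
  proof (rule that[OF nus])
    show "0 < nus ! i" if "i < r" for i
      by (rule left_root_mult_pos[OF roots[OF that] mults[OF that]])
    show "open (U i) \<and> lam0 \<in> U i \<and> U i \<subseteq> \<Omega> \<and> vec_holo (U i) n (g i)" if "i < r" for i
      using Ug[OF that] by blast
    show "transpose_mat (T z) *\<^sub>v row (V z) i = ((z - lam0) ^ (nus ! i)) \<cdot>\<^sub>v g i z"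
      if "i < r" "z \<in> U i" for i z
      using Ug[OF that(1)] that(2) by blast
  qed
qed

lemma left_canonical_factorization:
  assumes "open \<Omega>" "lam0 \<in> \<Omega>" and T: "mat_holo \<Omega> n n T"
    and LC: "left_canonical \<Omega> n T lam0 ms r V"
  obtains S G nus where "open S" "lam0 \<in> S" "S \<subseteq> \<Omega>" "mat_holo S r n G"
    "length nus = r" "sorted_wrt (\<ge>) nus" "(\<Sum>i<r. nus ! i) = (\<Sum>i<r. ms ! i)"
    "\<And>i. i < r \<Longrightarrow> 0 < nus ! i"
    "\<And>z i j. z \<in> S \<Longrightarrow> i < r \<Longrightarrow> j < n \<Longrightarrow>
       (V z * T z) $$ (i,j) = (z - lam0) ^ (nus ! i) * G z $$ (i,j)"
proof (rule left_canonical_row_factors[OF LC])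
  fix U g nus
  assume nus: "length nus = r" "sorted_wrt (\<ge>) nus" "(\<Sum>i<r. nus ! i) = (\<Sum>i<r. ms ! i)"
      "\<And>i. i < r \<Longrightarrow> 0 < nus ! i"
    and U: "\<And>i. i < r \<Longrightarrow> open (U i) \<and> lam0 \<in> U i \<and> U i \<subseteq> \<Omega> \<and> vec_holo (U i) n (g i)"
    and Vg: "\<And>i z. i < r \<Longrightarrow> z \<in> U i \<Longrightarrow>
        transpose_mat (T z) *\<^sub>v row (V z) i = ((z - lam0) ^ (nus ! i)) \<cdot>\<^sub>v g i z"
  have V: "mat_holo \<Omega> r n V" using LC unfolding left_canonical_def by blast
  define S where "S = \<Omega> \<inter> (\<Inter>i<r. U i)"
  define G where "G z = mat r n (\<lambda>(i,j). g i z $ j)" for z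
  have S: "open S" "lam0 \<in> S" "S \<subseteq> \<Omega>" "\<And>i. i < r \<Longrightarrow> S \<subseteq> U i"
    using assms(1,2) U unfolding S_def by auto
  have G: "mat_holo S r n G"
  proof (rule mat_holo_entrywise[where f = "\<lambda>i j z. g i z $ j"])
    show "(\<lambda>z. g i z $ j) holomorphic_on S" if "i < r" "j < n" for i j
      using U[OF that(1)] that(2) S(4)[OF that(1)] unfolding vec_holo_def by (meson holomorphic_on_subset)
  qed (simp_all add: G_def)
  have factor: "(V z * T z) $$ (i,j) = (z - lam0) ^ (nus ! i) * G z $$ (i,j)"
    if "z \<in> S" "i < r" "j < n" for z i j
  proof -
    have z: "z \<in> U i" "z \<in> \<Omega>" using that S by auto
    then have "g i z \<in> carrier_vec n" using U[OF that(2)] unfolding vec_holo_def by blast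
    moreover have "(V z * T z) $$ (i,j) = (transpose_mat (T z) *\<^sub>v row (V z) i) $ j"
      using mat_holo_carrier[OF V z(2)] mat_holo_carrier[OF T z(2)] that(2,3)
      by (rule index_mult_mat_as_row)
    ultimately show ?thesis using Vg[OF that(2) z(1)] that(2,3) by (simp add: G_def)
  qed
  show thesis by (rule that[OF S(1-3) G nus factor])
qed


section \<open>Unimodularity of \<open>\<Delta>\<^sup>-\<^sup>1 V T Y\<close>\<close>

locale canonical_pair_near =
  fixes S :: "complex set" and lam0 :: complex and n r :: nat and ms nus :: "nat list"
    and T P P' Q Q' V Y G :: "complex \<Rightarrow> complex mat"
  assumes open_S: "open S" and lam0_in_S: "lam0 \<in> S"
    and sorted_ms: "sorted_wrt (\<ge>) ms" and length_ms: "length ms = n"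
    and r_le_n: "r \<le> n" and ms_vanish: "\<And>i. r \<le> i \<Longrightarrow> i < n \<Longrightarrow> ms ! i = 0"
    and T_holo: "mat_holo S n n T"
    and P_holo: "mat_holo S n n P" and P'_holo: "mat_holo S n n P'"
    and Q_holo: "mat_holo S n n Q" and Q'_holo: "mat_holo S n n Q'"
    and P'_P: "\<And>z. z \<in> S \<Longrightarrow> P' z * P z = 1\<^sub>m n"
    and Q_Q': "\<And>z. z \<in> S \<Longrightarrow> Q z * Q' z = 1\<^sub>m n"
    and smith_form: "\<And>z. z \<in> S \<Longrightarrow> P z * T z * Q z = Delta lam0 ms n z"
    and V_holo: "mat_holo S r n V" and Y_holo: "mat_holo S n r Y" and G_holo: "mat_holo S r n G"
    and length_nus: "length nus = r" and sorted_nus: "sorted_wrt (\<ge>) nus"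
    and sum_nus: "(\<Sum>i<r. nus ! i) = (\<Sum>i<r. ms ! i)"
    and nus_pos: "\<And>i. i < r \<Longrightarrow> 0 < nus ! i"
    and VT_factor: "\<And>z i j. z \<in> S \<Longrightarrow> i < r \<Longrightarrow> j < n \<Longrightarrow>
      (V z * T z) $$ (i,j) = (z - lam0) ^ (nus ! i) * G z $$ (i,j)"
    and V_rows_indep: "\<And>c. c \<in> carrier_vec r \<Longrightarrow> transpose_mat (V lam0) *\<^sub>v c = 0\<^sub>v n \<Longrightarrow> c = 0\<^sub>v r"
    and Y_cols_indep: "\<And>c. c \<in> carrier_vec r \<Longrightarrow> Y lam0 *\<^sub>v c = 0\<^sub>v n \<Longrightarrow> c = 0\<^sub>v r"
    and TY_center: "T lam0 * Y lam0 = 0\<^sub>m n r"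
begin

lemma carrier_at:
  assumes "z \<in> S"
  shows "T z \<in> carrier_mat n n" "P z \<in> carrier_mat n n" "P' z \<in> carrier_mat n n"
    "Q z \<in> carrier_mat n n" "Q' z \<in> carrier_mat n n"
    "V z \<in> carrier_mat r n" "Y z \<in> carrier_mat n r" "G z \<in> carrier_mat r n"
  using mat_holo_carrier[OF T_holo assms] mat_holo_carrier[OF P_holo assms]
    mat_holo_carrier[OF P'_holo assms] mat_holo_carrier[OF Q_holo assms]
    mat_holo_carrier[OF Q'_holo assms] mat_holo_carrier[OF V_holo assms]
    mat_holo_carrier[OF Y_holo assms] mat_holo_carrier[OF G_holo assms]
  by simp_all

definition VP :: "complex \<Rightarrow> complex mat" where "VP z = V z * P' z"

definition GQ :: "complex \<Rightarrow> complex mat" where "GQ z = G z * Q z"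

definition QY :: "complex \<Rightarrow> complex mat" where "QY z = Q' z * Y z"

lemma VP_holo: "mat_holo S r n VP"
  unfolding VP_def[abs_def] by (rule mat_holo_mult[OF V_holo P'_holo])

lemma GQ_holo: "mat_holo S r n GQ"
  unfolding GQ_def[abs_def] by (rule mat_holo_mult[OF G_holo Q_holo])

lemma QY_holo: "mat_holo S n r QY"
  unfolding QY_def[abs_def] by (rule mat_holo_mult[OF Q'_holo Y_holo])

lemma VTQ_eq:
  assumes z: "z \<in> S"
  shows "V z * T z * Q z = Delta lam0 nus r z * GQ z"
proof (rule eq_matI)
  fix i j assume "i < dim_row (Delta lam0 nus r z * GQ z)" "j < dim_col (Delta lam0 nus r z * GQ z)"
  then have ij: "i < r" "j < n" using mat_holo_carrier[OF GQ_holo z] by auto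
  note c = carrier_at[OF z]
  have "(V z * T z * Q z) $$ (i,j) = (\<Sum>k<n. (V z * T z) $$ (i,k) * Q z $$ (k,j))"
    using c ij by (intro index_mult_mat_sum) auto
  also have "\<dots> = (\<Sum>k<n. (z - lam0) ^ (nus ! i) * (G z $$ (i,k) * Q z $$ (k,j)))"
    using VT_factor[OF z ij(1)] by (intro sum.cong) auto
  also have "\<dots> = (z - lam0) ^ (nus ! i) * GQ z $$ (i,j)"
    unfolding GQ_def index_mult_mat_sum[OF c(8) c(4) ij] by (simp add: sum_distrib_left)
  also have "\<dots> = (Delta lam0 nus r z * GQ z) $$ (i,j)"
    using index_Delta_mult[OF mat_holo_carrier[OF GQ_holo z] ij] by simp
  finally show "(V z * T z * Q z) $$ (i,j) = (Delta lam0 nus r z * GQ z) $$ (i,j)" .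
qed (use carrier_at[OF z] mat_holo_carrier[OF GQ_holo z] in auto)

lemma VP_Delta_eq:
  assumes z: "z \<in> S"
  shows "VP z * Delta lam0 ms n z = Delta lam0 nus r z * GQ z"
proof -
  note c = carrier_at[OF z]
  have TQ: "T z * Q z \<in> carrier_mat n n" using c by simp
  have "VP z * Delta lam0 ms n z = V z * P' z * (P z * (T z * Q z))"
    using c by (simp add: VP_def smith_form[OF z, symmetric])
  also have "\<dots> = V z * (P' z * (P z * (T z * Q z)))"
    by (rule assoc_mult_mat) (use c TQ in auto)
  also have "P' z * (P z * (T z * Q z)) = T z * Q z"
    by (rule mult_mat_cancel_left[OF c(2,3) P'_P[OF z] TQ])
  also have "V z * (T z * Q z) = Delta lam0 nus r z * GQ z"
    using c VTQ_eq[OF z] by simp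
  finally show ?thesis .
qed

lemma index_VP_Delta:
  assumes "z \<in> S" "i < r" "j < n"
  shows "VP z $$ (i,j) * (z - lam0) ^ (ms ! j) = (z - lam0) ^ (nus ! i) * GQ z $$ (i,j)"
  using arg_cong[OF VP_Delta_eq[OF assms(1)], of "\<lambda>A. A $$ (i,j)"] assms
    index_mult_Delta[OF mat_holo_carrier[OF VP_holo assms(1)]]
    index_Delta_mult[OF mat_holo_carrier[OF GQ_holo assms(1)]]
  by simp

lemma VP_center_vanishes:
  assumes ij: "i < r" "j < n" and lt: "ms ! j < nus ! i"
  shows "VP lam0 $$ (i,j) = 0"
proof -
  let ?d = "nus ! i - ms ! j"
  have "VP lam0 $$ (i,j) = (lam0 - lam0) ^ ?d * GQ lam0 $$ (i,j)"
  proof (rule continuous_on_eq_at_punctured[OF open_S lam0_in_S,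
        where f = "\<lambda>z. VP z $$ (i,j)" and g = "\<lambda>z. (z - lam0) ^ ?d * GQ z $$ (i,j)"])
    show "continuous_on S (\<lambda>z. VP z $$ (i,j))"
      by (rule holomorphic_on_imp_continuous_on[OF mat_holo_index[OF VP_holo ij]])
    show "continuous_on S (\<lambda>z. (z - lam0) ^ ?d * GQ z $$ (i,j))"
      by (intro holomorphic_on_imp_continuous_on holomorphic_intros mat_holo_index[OF GQ_holo ij])
  next
    fix z assume z: "z \<in> S - {lam0}"
    have "(z - lam0) ^ (nus ! i) = (z - lam0) ^ (ms ! j) * (z - lam0) ^ ?d"
      using lt by (simp flip: power_add)
    then have "VP z $$ (i,j) * (z - lam0) ^ (ms ! j) = (z - lam0) ^ ?d * GQ z $$ (i,j) * (z - lam0) ^ (ms ! j)"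
      using index_VP_Delta[of z i j] z ij by (simp add: ac_simps)
    then show "VP z $$ (i,j) = (z - lam0) ^ ?d * GQ z $$ (i,j)" using z by simp
  qed
  then show ?thesis using lt by simp
qed

lemma VP_center_rows_indep:
  assumes c: "c \<in> carrier_vec r" and "transpose_mat (VP lam0) *\<^sub>v c = 0\<^sub>v n"
  shows "c = 0\<^sub>v r"
proof (rule V_rows_indep[OF c])
  note l = carrier_at[OF lam0_in_S]
  have inv: "transpose_mat (P lam0) * transpose_mat (P' lam0) = 1\<^sub>m n"
    using transpose_mult[OF l(3,2)] P'_P[OF lam0_in_S] by simp
  have "transpose_mat (V lam0) *\<^sub>v c
      = transpose_mat (P lam0) *\<^sub>v (transpose_mat (P' lam0) *\<^sub>v (transpose_mat (V lam0) *\<^sub>v c))"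
    using l c by (simp add: mult_mat_vec_cancel_left[OF _ _ inv])
  also have "transpose_mat (P' lam0) *\<^sub>v (transpose_mat (V lam0) *\<^sub>v c) = transpose_mat (VP lam0) *\<^sub>v c"
    using l c by (simp add: VP_def transpose_mult[OF l(6,3)])
  finally show "transpose_mat (V lam0) *\<^sub>v c = 0\<^sub>v n"
    using assms(2) l by (simp add: mult_mat_vec_zero[of _ n n])
qed

text \<open>Rank argument: if some \<open>\<nu>\<^sub>k\<close> exceeded \<open>m\<^sub>k\<close>, the first \<open>k + 1\<close> rows of \<open>V P\<^sup>-\<^sup>1\<close> at
  \<open>lam0\<close> would vanish outside the first \<open>k\<close> columns, contradicting their independence.\<close>

lemma nus_le_ms:
  assumes "k < r"
  shows "nus ! k \<le> ms ! k"
proof (rule ccontr)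
  assume "\<not> nus ! k \<le> ms ! k"
  then have lt: "ms ! k < nus ! k" by simp
  obtain c where "c \<in> carrier_vec r" "c \<noteq> 0\<^sub>v r" "transpose_mat (VP lam0) *\<^sub>v c = 0\<^sub>v n"
  proof (rule kernel_vector_if_zero_corner)
    show "transpose_mat (VP lam0) \<in> carrier_mat n r"
      using mat_holo_carrier[OF VP_holo lam0_in_S] by simp
    show "k < r" "k < n" using assms r_le_n by auto
    fix i j assume ij: "i \<le> k" "k \<le> j" "j < n"
    have "ms ! j \<le> ms ! k"
      using ij sorted_ms length_ms by (cases "k = j") (auto simp: sorted_wrt_iff_nth_less)
    moreover have "nus ! k \<le> nus ! i"
      using ij assms sorted_nus length_nus by (cases "i = k") (auto simp: sorted_wrt_iff_nth_less)
    ultimately have "VP lam0 $$ (i,j) = 0"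
      using VP_center_vanishes[of i j] ij assms lt by simp
    then show "transpose_mat (VP lam0) $$ (j,i) = 0"
      using mat_holo_carrier[OF VP_holo lam0_in_S] ij assms by simp
  qed
  then show False using VP_center_rows_indep by blast
qed

lemma nus_eq_ms: "i < r \<Longrightarrow> nus ! i = ms ! i"
  using sum_mono_inv[of "\<lambda>i. nus ! i" "{..<r}" "\<lambda>i. ms ! i"] sum_nus nus_le_ms by simp

lemma Delta_nus_eq_Delta_ms: "Delta lam0 nus r z = Delta lam0 ms r z"
  by (rule eq_matI) (auto simp: Delta_def nus_eq_ms)

lemma VP_center_cols_vanish: "i < r \<Longrightarrow> r \<le> j \<Longrightarrow> j < n \<Longrightarrow> VP lam0 $$ (i,j) = 0"
  using VP_center_vanishes ms_vanish nus_pos by simp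

lemma det_leading_VP_center: "det (leading_block r (VP lam0)) \<noteq> 0"
proof -
  have VP: "VP lam0 \<in> carrier_mat r n" by (rule mat_holo_carrier[OF VP_holo lam0_in_S])
  have "det (leading_block r (transpose_mat (VP lam0))) \<noteq> 0"
    by (rule det_leading_block_nonzero[of _ n])
      (use VP VP_center_cols_vanish VP_center_rows_indep in auto)
  then show ?thesis
    using VP r_le_n det_transpose[OF leading_block_carrier[of r "VP lam0"]]
    by (simp add: transpose_leading_block)
qed

lemma leading_GQ_eq:
  assumes z: "z \<in> S" "z \<noteq> lam0"
  shows "leading_block r (GQ z) = Delta_inv lam0 ms r z * leading_block r (VP z) * Delta lam0 ms r z"
proof (rule eq_matI)
  fix a j assume "a < dim_row (Delta_inv lam0 ms r z * leading_block r (VP z) * Delta lam0 ms r z)"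
    "j < dim_col (Delta_inv lam0 ms r z * leading_block r (VP z) * Delta lam0 ms r z)"
  then have aj: "a < r" "j < r" by auto
  have "(Delta_inv lam0 ms r z * leading_block r (VP z) * Delta lam0 ms r z) $$ (a,j)
      = VP z $$ (a,j) * (z - lam0) ^ (ms ! j) / (z - lam0) ^ (ms ! a)"
    using index_mult_Delta[OF mult_carrier_mat[OF Delta_inv_carrier leading_block_carrier] aj]
      index_Delta_inv_mult[OF leading_block_carrier aj] aj by simp
  also have "\<dots> = GQ z $$ (a,j)"
    using index_VP_Delta[OF z(1) aj(1)] aj r_le_n z(2) nus_eq_ms[OF aj(1)] by simp
  finally show "leading_block r (GQ z) $$ (a,j)
      = (Delta_inv lam0 ms r z * leading_block r (VP z) * Delta lam0 ms r z) $$ (a,j)"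
    using aj by simp
qed auto

lemma det_leading_GQ_center: "det (leading_block r (GQ lam0)) \<noteq> 0"
proof -
  have "det (leading_block r (GQ lam0)) = det (leading_block r (VP lam0))"
  proof (rule continuous_on_eq_at_punctured[OF open_S lam0_in_S,
        where f = "\<lambda>z. det (leading_block r (GQ z))" and g = "\<lambda>z. det (leading_block r (VP z))"])
    have "mat_holo S r r (\<lambda>z. leading_block r (GQ z))" "mat_holo S r r (\<lambda>z. leading_block r (VP z))"
      using mat_holo_leading_block[OF GQ_holo _ r_le_n] mat_holo_leading_block[OF VP_holo _ r_le_n]
      by simp_all
    then show "continuous_on S (\<lambda>z. det (leading_block r (GQ z)))"
      "continuous_on S (\<lambda>z. det (leading_block r (VP z)))"
      by (intro holomorphic_on_imp_continuous_on holomorphic_on_det; simp)+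
    show "det (leading_block r (GQ z)) = det (leading_block r (VP z))" if "z \<in> S - {lam0}" for z
      using that leading_GQ_eq[of z] det_Delta_conjugate[of z lam0 "leading_block r (VP z)"] by simp
  qed
  then show ?thesis using det_leading_VP_center by simp
qed

lemma QY_center_vanishes:
  assumes "r \<le> j" "j < n" "b < r"
  shows "QY lam0 $$ (j,b) = 0"
proof -
  note l = carrier_at[OF lam0_in_S]
  have "Delta lam0 ms n lam0 * QY lam0 = P lam0 * T lam0 * Q lam0 * (Q' lam0 * Y lam0)"
    by (simp only: QY_def smith_form[OF lam0_in_S])
  also have "\<dots> = P lam0 * T lam0 * (Q lam0 * (Q' lam0 * Y lam0))"
    by (rule assoc_mult_mat) (use l in auto)
  also have "\<dots> = P lam0 * T lam0 * Y lam0"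
    using mult_mat_cancel_left[OF l(5,4) Q_Q'[OF lam0_in_S] l(7)] by simp
  also have "\<dots> = 0\<^sub>m n r"
    using l TY_center by simp
  finally have "(Delta lam0 ms n lam0 * QY lam0) $$ (j,b) = 0" using assms by simp
  then show ?thesis
    using index_Delta_mult[OF mat_holo_carrier[OF QY_holo lam0_in_S]] ms_vanish assms by simp
qed

lemma QY_center_cols_indep:
  assumes c: "c \<in> carrier_vec r" and "QY lam0 *\<^sub>v c = 0\<^sub>v n"
  shows "c = 0\<^sub>v r"
proof (rule Y_cols_indep[OF c])
  note l = carrier_at[OF lam0_in_S]
  have "Y lam0 *\<^sub>v c = Q lam0 *\<^sub>v (Q' lam0 *\<^sub>v (Y lam0 *\<^sub>v c))"
    using l c by (simp add: mult_mat_vec_cancel_left[OF _ _ Q_Q'[OF lam0_in_S]])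
  also have "Q' lam0 *\<^sub>v (Y lam0 *\<^sub>v c) = QY lam0 *\<^sub>v c"
    using l c by (simp add: QY_def)
  finally show "Y lam0 *\<^sub>v c = 0\<^sub>v n"
    using assms(2) l by (simp add: mult_mat_vec_zero[of _ n n])
qed

definition Delta_inv_VTY :: "complex \<Rightarrow> complex mat" where
  "Delta_inv_VTY z = GQ z * QY z"

lemma Delta_inv_VTY_eq:
  assumes z: "z \<in> S" "z \<noteq> lam0"
  shows "Delta_inv_VTY z = Delta_inv lam0 ms r z * (V z * T z * Y z)"
proof -
  note c = carrier_at[OF z(1)] mat_holo_carrier[OF GQ_holo z(1)] mat_holo_carrier[OF QY_holo z(1)]
  have "V z * T z * Y z = V z * T z * (Q z * (Q' z * Y z))"
    using mult_mat_cancel_left[OF c(5,4) Q_Q'[OF z(1)] c(7)] by simp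
  also have "\<dots> = V z * T z * Q z * QY z"
    unfolding QY_def by (rule assoc_mult_mat[symmetric]) (use c in auto)
  also have "\<dots> = Delta lam0 ms r z * Delta_inv_VTY z"
    using c VTQ_eq[OF z(1)] assoc_mult_mat[OF Delta_carrier c(9) c(10)]
    by (simp add: Delta_inv_VTY_def Delta_nus_eq_Delta_ms)
  moreover have "Delta_inv_VTY z \<in> carrier_mat r r" using c by (simp add: Delta_inv_VTY_def)
  ultimately show ?thesis
    using mult_mat_cancel_left[OF Delta_carrier Delta_inv_carrier Delta_inv_mult_Delta[OF z(2)]] by simp
qed

lemma Delta_inv_VTY_unimodular: "unimodular0 lam0 r Delta_inv_VTY"
proof (rule unimodular0_if_det_nonzero[OF open_S lam0_in_S])
  show "mat_holo S r r Delta_inv_VTY"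
    unfolding Delta_inv_VTY_def[abs_def] by (rule mat_holo_mult[OF GQ_holo QY_holo])
  have "Delta_inv_VTY lam0 = leading_block r (GQ lam0) * leading_block r (QY lam0)"
    unfolding Delta_inv_VTY_def
    by (rule mult_eq_leading_blocks[OF mat_holo_carrier[OF GQ_holo lam0_in_S]
          mat_holo_carrier[OF QY_holo lam0_in_S] r_le_n QY_center_vanishes])
  moreover have "det (leading_block r (QY lam0)) \<noteq> 0"
    by (rule det_leading_block_nonzero[OF mat_holo_carrier[OF QY_holo lam0_in_S]
          QY_center_vanishes QY_center_cols_indep])
  ultimately show "det (Delta_inv_VTY lam0) \<noteq> 0"
    using det_leading_GQ_center by (simp add: det_mult[of _ r])
qed

end

lemma unimodular_Delta_inv_VTY:
  assumes \<Omega>: "open \<Omega>" "lam0 \<in> \<Omega>" and T: "mat_holo \<Omega> n n T"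
    and ms: "sorted_wrt (\<ge>) ms" "length ms = n" "r \<le> n" "\<And>i. r \<le> i \<Longrightarrow> i < n \<Longrightarrow> ms ! i = 0"
    and P: "unimodular0 lam0 n P" and Q: "unimodular0 lam0 n Q"
    and U: "open U" "lam0 \<in> U" and smith: "\<And>z. z \<in> U \<inter> \<Omega> \<Longrightarrow> P z * T z * Q z = Delta lam0 ms n z"
    and LC: "left_canonical \<Omega> n T lam0 ms r V" and RC: "right_canonical \<Omega> n T lam0 ms r Y"
  shows "\<exists>W. unimodular0 lam0 r W \<and> (\<exists>U. open U \<and> lam0 \<in> U \<and>
           (\<forall>z\<in>U \<inter> \<Omega> - {lam0}. W z = Delta_inv lam0 ms r z * (V z * T z * Y z)))"
proof -
  obtain UP P' where UP: "open UP" "lam0 \<in> UP" "mat_holo UP n n P" "mat_holo UP n n P'"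
    and PP': "\<forall>z\<in>UP. P z * P' z = 1\<^sub>m n \<and> P' z * P z = 1\<^sub>m n"
    using P unfolding unimodular0_def by blast
  obtain UQ Q' where UQ: "open UQ" "lam0 \<in> UQ" "mat_holo UQ n n Q" "mat_holo UQ n n Q'"
    and QQ': "\<forall>z\<in>UQ. Q z * Q' z = 1\<^sub>m n \<and> Q' z * Q z = 1\<^sub>m n"
    using Q unfolding unimodular0_def by blast
  obtain S0 G nus where S0: "open S0" "lam0 \<in> S0" "S0 \<subseteq> \<Omega>" and G: "mat_holo S0 r n G"
    and nus: "length nus = r" "sorted_wrt (\<ge>) nus" "(\<Sum>i<r. nus ! i) = (\<Sum>i<r. ms ! i)"
      "\<And>i. i < r \<Longrightarrow> 0 < nus ! i"
    and VT: "\<And>z i j. z \<in> S0 \<Longrightarrow> i < r \<Longrightarrow> j < n \<Longrightarrow>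
      (V z * T z) $$ (i,j) = (z - lam0) ^ (nus ! i) * G z $$ (i,j)"
    using left_canonical_factorization[OF \<Omega> T LC] by blast
  define S where "S = S0 \<inter> U \<inter> UP \<inter> UQ"
  have S: "open S" "lam0 \<in> S" "S \<subseteq> \<Omega>" "S \<subseteq> S0" "S \<subseteq> UP" "S \<subseteq> UQ"
    using S0 U UP UQ unfolding S_def by auto
  interpret canonical_pair_near S lam0 n r ms nus T P P' Q Q' V Y G
  proof unfold_locales
    show "mat_holo S r n V" "mat_holo S n r Y"
      using LC RC S(3) mat_holo_subset unfolding left_canonical_def right_canonical_def by blast+
    show "\<And>c. c \<in> carrier_vec r \<Longrightarrow> transpose_mat (V lam0) *\<^sub>v c = 0\<^sub>v n \<Longrightarrow> c = 0\<^sub>v r"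
      using LC unfolding left_canonical_def by blast
    show "\<And>c. c \<in> carrier_vec r \<Longrightarrow> Y lam0 *\<^sub>v c = 0\<^sub>v n \<Longrightarrow> c = 0\<^sub>v r"
      using RC unfolding right_canonical_def by blast
  qed (use S ms nus PP' QQ' VT smith right_canonical_center[OF \<Omega>(2) T RC]
        mat_holo_subset[OF T] mat_holo_subset[OF G] mat_holo_subset[OF UP(3)] mat_holo_subset[OF UP(4)]
        mat_holo_subset[OF UQ(3)] mat_holo_subset[OF UQ(4)] in \<open>auto simp: S_def\<close>)
  show ?thesis
    using Delta_inv_VTY_unimodular Delta_inv_VTY_eq S(1,2) by blast
qed

lemma smith_form_transpose:
  assumes T: "mat_holo \<Omega> n n T" and P: "unimodular0 lam0 n P" and Q: "unimodular0 lam0 n Q"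
    and U: "open U" "lam0 \<in> U" and smith: "\<And>z. z \<in> U \<inter> \<Omega> \<Longrightarrow> P z * T z * Q z = Delta lam0 ms n z"
  obtains U' where "open U'" "lam0 \<in> U'"
    "\<And>z. z \<in> U' \<inter> \<Omega> \<Longrightarrow> transpose_mat (Q z) * transpose_mat (T z) * transpose_mat (P z) = Delta lam0 ms n z"
proof -
  obtain UP where UP: "open UP" "lam0 \<in> UP" "mat_holo UP n n P"
    using P unfolding unimodular0_def by blast
  obtain UQ where UQ: "open UQ" "lam0 \<in> UQ" "mat_holo UQ n n Q"
    using Q unfolding unimodular0_def by blast
  have "transpose_mat (Q z) * transpose_mat (T z) * transpose_mat (P z) = Delta lam0 ms n z"
    if "z \<in> (U \<inter> UP \<inter> UQ) \<inter> \<Omega>" for z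
  proof -
    have z: "z \<in> UP" "z \<in> \<Omega>" "z \<in> UQ" "z \<in> U \<inter> \<Omega>" using that by auto
    have "transpose_mat (P z * T z * Q z) = transpose_mat (Q z) * transpose_mat (T z) * transpose_mat (P z)"
      by (rule transpose_mult_mult[OF mat_holo_carrier[OF UP(3) z(1)] mat_holo_carrier[OF T z(2)]
            mat_holo_carrier[OF UQ(3) z(3)]])
    then show ?thesis using smith[OF z(4)] by simp
  qed
  moreover have "open (U \<inter> UP \<inter> UQ)" "lam0 \<in> U \<inter> UP \<inter> UQ" using U UP UQ by auto
  ultimately show ?thesis using that by blast
qed

lemma transpose_Delta_inv_mult_transposes:
  assumes "V \<in> carrier_mat r n" "T \<in> carrier_mat n n" "Y \<in> carrier_mat n r"
  shows "transpose_mat (Delta_inv lam0 ms r z * (transpose_mat Y * transpose_mat T * transpose_mat V))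
    = V * T * Y * Delta_inv lam0 ms r z"
proof -
  let ?X = "transpose_mat Y * transpose_mat T * transpose_mat V"
  have X: "?X \<in> carrier_mat r r" using assms by simp
  have "transpose_mat (Delta_inv lam0 ms r z * ?X) = transpose_mat ?X * Delta_inv lam0 ms r z"
    using transpose_mult[OF Delta_inv_carrier X] by simp
  also have "transpose_mat ?X = V * T * Y"
    using transpose_mult_mult[of "transpose_mat Y" r n "transpose_mat T" n "transpose_mat V" r] assms
    by simp
  finally show ?thesis .
qed

lemma unimodular_VTY_Delta_inv:
  assumes \<Omega>: "open \<Omega>" "lam0 \<in> \<Omega>" and T: "mat_holo \<Omega> n n T"
    and ms: "sorted_wrt (\<ge>) ms" "length ms = n" "r \<le> n" "\<And>i. r \<le> i \<Longrightarrow> i < n \<Longrightarrow> ms ! i = 0"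
    and P: "unimodular0 lam0 n P" and Q: "unimodular0 lam0 n Q"
    and U: "open U" "lam0 \<in> U" and smith: "\<And>z. z \<in> U \<inter> \<Omega> \<Longrightarrow> P z * T z * Q z = Delta lam0 ms n z"
    and LC: "left_canonical \<Omega> n T lam0 ms r V" and RC: "right_canonical \<Omega> n T lam0 ms r Y"
  shows "\<exists>W. unimodular0 lam0 r W \<and> (\<exists>U. open U \<and> lam0 \<in> U \<and>
           (\<forall>z\<in>U \<inter> \<Omega> - {lam0}. W z = (V z * T z * Y z) * Delta_inv lam0 ms r z))"
proof -
  obtain U' where U': "open U'" "lam0 \<in> U'" and smith':
    "\<And>z. z \<in> U' \<inter> \<Omega> \<Longrightarrow> transpose_mat (Q z) * transpose_mat (T z) * transpose_mat (P z) = Delta lam0 ms n z"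
    using smith_form_transpose[OF T P Q U smith] by blast
  have LC': "left_canonical \<Omega> n (\<lambda>z. transpose_mat (T z)) lam0 ms r (\<lambda>z. transpose_mat (Y z))"
    using left_canonical_iff_right_canonical_transpose[of lam0 \<Omega> n "\<lambda>z. transpose_mat (T z)" ms r
        "\<lambda>z. transpose_mat (Y z)"] RC \<Omega>(2) by simp
  have RC': "right_canonical \<Omega> n (\<lambda>z. transpose_mat (T z)) lam0 ms r (\<lambda>z. transpose_mat (V z))"
    using left_canonical_iff_right_canonical_transpose[OF \<Omega>(2)] LC by blast
  obtain W U'' where W: "unimodular0 lam0 r W" and U'': "open U''" "lam0 \<in> U''"
    and W_eq: "\<forall>z\<in>U'' \<inter> \<Omega> - {lam0}. W z = Delta_inv lam0 ms r z *
        (transpose_mat (Y z) * transpose_mat (T z) * transpose_mat (V z))"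
    using unimodular_Delta_inv_VTY[OF \<Omega> mat_holo_transpose[OF T] ms unimodular0_transpose[OF Q]
        unimodular0_transpose[OF P] U' smith' LC' RC'] by blast
  have "transpose_mat (W z) = V z * T z * Y z * Delta_inv lam0 ms r z" if "z \<in> U'' \<inter> \<Omega> - {lam0}" for z
    using W_eq that transpose_Delta_inv_mult_transposes[of "V z" r n "T z" "Y z"]
      T LC RC mat_holo_carrier unfolding left_canonical_def right_canonical_def by auto
  then show ?thesis using unimodular0_transpose[OF W] U'' by blast
qed

theorem mainTheorem7:
  fixes \<Omega> :: "complex set" and lam0 :: complex and n r :: nat
    and T V Y :: "complex \<Rightarrow> complex mat" and ms :: "nat list"
  assumes "open \<Omega>" and "lam0 \<in> \<Omega>"
    and "mat_holo \<Omega> n n T"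
    and "\<not> (\<forall>z\<in>\<Omega>. det (T z) = 0)"
    and "det (T lam0) = 0"
    and "r = kernel_dim (T lam0)"
    and "partial_mults \<Omega> n T lam0 ms"
    and "left_canonical \<Omega> n T lam0 ms r V"
    and "right_canonical \<Omega> n T lam0 ms r Y"
  shows "(\<exists>W. unimodular0 lam0 r W \<and> (\<exists>U. open U \<and> lam0 \<in> U \<and>
            (\<forall>z\<in>U \<inter> \<Omega> - {lam0}. W z = Delta_inv lam0 ms r z * (V z * T z * Y z))))
       \<and> (\<exists>W. unimodular0 lam0 r W \<and> (\<exists>U. open U \<and> lam0 \<in> U \<and>
            (\<forall>z\<in>U \<inter> \<Omega> - {lam0}. W z = (V z * T z * Y z) * Delta_inv lam0 ms r z)))"
proof -
  have ms: "length ms = n" "sorted_wrt (\<ge>) ms"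
    using assms(7) unfolding partial_mults_def by auto
  obtain P Q U where P: "unimodular0 lam0 n P" and Q: "unimodular0 lam0 n Q"
    and U: "open U" "lam0 \<in> U" and smith: "\<forall>z\<in>U \<inter> \<Omega>. P z * T z * Q z = Delta lam0 ms n z"
    using assms(7) unfolding partial_mults_def by blast
  obtain k where "k \<le> n" "\<And>i. i < k \<Longrightarrow> 0 < ms ! i" "\<And>i. k \<le> i \<Longrightarrow> i < n \<Longrightarrow> ms ! i = 0"
    using sorted_desc_nat_split[OF ms(2)] ms(1) by metis
  then have "r \<le> n" and vanish: "\<And>i. r \<le> i \<Longrightarrow> i < n \<Longrightarrow> ms ! i = 0"
    using kernel_dim_center[OF assms(2,3,7)] assms(6) by auto
  show ?thesis
    using unimodular_Delta_inv_VTY[OF assms(1-3) ms(2,1) \<open>r \<le> n\<close> vanish P Q U smith[rule_format] assms(8,9)]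
      unimodular_VTY_Delta_inv[OF assms(1-3) ms(2,1) \<open>r \<le> n\<close> vanish P Q U smith[rule_format] assms(8,9)]
    by (rule conjI)
qed

end
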